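(* Let $(X,d)$ be a metric space, $0<\rho<1$, and $\mu:X^k\to X$ a coordinatewise $\rho$-contractive $k$-mean. Then $\mu$ is weakly $\beta$-contractive.
   Context: A $k$-mean is a map $\mu:X^k\to X$ with $\mu(x,\ldots,x)=x$. It is coordinatewise $\rho$-contractive if $d(\mu(\mathbf{x}),\mu(\mathbf{y}))\le\rho\,d(x_j,y_j)$ whenever $\mathbf{x},\mathbf{y}\in X^k$ differ only in the $j$-th coordinate. The barycentric operator $\beta:X^{k+1}\to X^{k+1}$ is $\beta(\mathbf{x})_j=\mu(x_1,\ldots,x_{j-1},x_{j+1},\ldots,x_{k+1})$. For $\mathbf{x}\in X^{k+1}$, $\Delta(\mathbf{x})=\max_{i,j}d(x_i,x_j)$. $\mu$ is weakly $\beta$-contractive if $\lim_n\Delta(\beta^n(\mathbf{x}))=0$ for every $\mathbf{x}\in X^{k+1}$. *)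

theory Defs
  imports "HOL-Analysis.Analysis"
begin

text \<open>The metric space X is the carrier type 'a of class metric_space.
  Points of X^k are lists of length k (coordinates indexed 0..k-1).\<close>

definition is_kmean :: "nat \<Rightarrow> ('a list \<Rightarrow> 'a) \<Rightarrow> bool" where
  "is_kmean k \<mu> \<longleftrightarrow> (\<forall>x. \<mu> (replicate k x) = x)"

definition coordwise_contractive :: "nat \<Rightarrow> real \<Rightarrow> ('a::metric_space list \<Rightarrow> 'a) \<Rightarrow> bool" where
  "coordwise_contractive k \<rho> \<mu> \<longleftrightarrow>
     (\<forall>xs ys j. length xs = k \<longrightarrow> length ys = k \<longrightarrow> j < k \<longrightarrow>
        (\<forall>i<k. i \<noteq> j \<longrightarrow> xs ! i = ys ! i) \<longrightarrow>
        dist (\<mu> xs) (\<mu> ys) \<le> \<rho> * dist (xs ! j) (ys ! j))"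

definition barycentric :: "('a list \<Rightarrow> 'a) \<Rightarrow> 'a list \<Rightarrow> 'a list" where
  "barycentric \<mu> xs = map (\<lambda>j. \<mu> (take j xs @ drop (Suc j) xs)) [0..<length xs]"

definition Delta :: "'a::metric_space list \<Rightarrow> real" where
  "Delta xs = Max {dist (xs ! i) (xs ! j) | i j. i < length xs \<and> j < length xs}"

definition weakly_beta_contractive :: "nat \<Rightarrow> ('a::metric_space list \<Rightarrow> 'a) \<Rightarrow> bool" where
  "weakly_beta_contractive k \<mu> \<longleftrightarrow>
     (\<forall>xs. length xs = Suc k \<longrightarrow> (\<lambda>n. Delta ((barycentric \<mu> ^^ n) xs)) \<longlonglongrightarrow> 0)"

end

theory Submission
  imports Defs
begin

text \<open>The coordinates \<open>\<beta>(x)\<^sub>i\<close> and \<open>\<beta>(x)\<^sub>i\<^sub>+\<^sub>1\<close> are \<open>\<mu>\<close> applied to two tuples that differ only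
  in position \<open>i\<close>, where they hold \<open>x\<^sub>i\<^sub>+\<^sub>1\<close> and \<open>x\<^sub>i\<close>. Hence every gap \<open>d(x\<^sub>i, x\<^sub>i\<^sub>+\<^sub>1)\<close>
  between adjacent coordinates shrinks by the factor \<open>\<rho>\<close> under \<open>\<beta>\<close>, and by the triangle
  inequality \<open>\<Delta>\<close> is at most \<open>k\<close> times the largest adjacent gap. So
  \<open>\<Delta>(\<beta>\<^sup>n x) \<le> k \<rho>\<^sup>n \<Delta>(x) \<rightarrow> 0\<close>.\<close>

lemma length_barycentric [simp]: "length (barycentric \<mu> xs) = length xs"
  by (simp add: barycentric_def)

lemma length_funpow_barycentric [simp]: "length ((barycentric \<mu> ^^ n) xs) = length xs"
  by (induction n) simp_all

lemma nth_barycentric: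
  "j < length xs \<Longrightarrow> barycentric \<mu> xs ! j = \<mu> (take j xs @ drop (Suc j) xs)"
  by (simp add: barycentric_def)

lemma nth_take_drop_Suc:
  assumes "j < length xs" "l < length xs - 1"
  shows "(take j xs @ drop (Suc j) xs) ! l = (if l < j then xs ! l else xs ! Suc l)"
  using assms by (auto simp: nth_append min_def)

lemma dist_barycentric_adjacent:
  fixes \<mu> :: "'a::metric_space list \<Rightarrow> 'a"
  assumes contr: "coordwise_contractive k \<rho> \<mu>" and len: "length xs = Suc k" and i: "i < k"
  shows "dist (barycentric \<mu> xs ! i) (barycentric \<mu> xs ! Suc i) \<le> \<rho> * dist (xs ! i) (xs ! Suc i)"
proof -
  define ys where "ys = take (Suc i) xs @ drop (Suc (Suc i)) xs"
  define zs where "zs = take i xs @ drop (Suc i) xs"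
  have len_ys: "length ys = k" and len_zs: "length zs = k"
    using len i by (auto simp: ys_def zs_def)
  have agree: "\<forall>l<k. l \<noteq> i \<longrightarrow> ys ! l = zs ! l"
  proof (intro allI impI)
    fix l assume "l < k" "l \<noteq> i"
    then show "ys ! l = zs ! l"
      unfolding ys_def zs_def using nth_take_drop_Suc[of i xs l] nth_take_drop_Suc[of "Suc i" xs l] len i
      by auto
  qed
  have ys_i: "ys ! i = xs ! i" and zs_i: "zs ! i = xs ! Suc i"
    unfolding ys_def zs_def using nth_take_drop_Suc[of "Suc i" xs i] nth_take_drop_Suc[of i xs i] len i
    by auto
  have "dist (\<mu> ys) (\<mu> zs) \<le> \<rho> * dist (ys ! i) (zs ! i)"
    using contr len_ys len_zs i agree unfolding coordwise_contractive_def by blast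
  moreover have "barycentric \<mu> xs ! i = \<mu> zs" "barycentric \<mu> xs ! Suc i = \<mu> ys"
    using nth_barycentric[of i xs \<mu>] nth_barycentric[of "Suc i" xs \<mu>] len i
    by (auto simp: ys_def zs_def)
  ultimately show ?thesis using ys_i zs_i by (simp add: dist_commute)
qed

lemma dist_funpow_barycentric_adjacent:
  fixes \<mu> :: "'a::metric_space list \<Rightarrow> 'a"
  assumes contr: "coordwise_contractive k \<rho> \<mu>" and "0 \<le> \<rho>"
    and len: "length xs = Suc k" and gap: "\<And>i. i < k \<Longrightarrow> dist (xs ! i) (xs ! Suc i) \<le> e"
    and i: "i < k"
  shows "dist ((barycentric \<mu> ^^ n) xs ! i) ((barycentric \<mu> ^^ n) xs ! Suc i) \<le> \<rho> ^ n * e"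
  using i
proof (induction n arbitrary: i)
  case 0
  then show ?case using gap by simp
next
  case (Suc n)
  let ?ys = "(barycentric \<mu> ^^ n) xs"
  have "dist (barycentric \<mu> ?ys ! i) (barycentric \<mu> ?ys ! Suc i) \<le> \<rho> * dist (?ys ! i) (?ys ! Suc i)"
    using dist_barycentric_adjacent[OF contr _ Suc.prems] len by simp
  also have "\<dots> \<le> \<rho> * (\<rho> ^ n * e)"
    using Suc \<open>0 \<le> \<rho>\<close> by (intro mult_left_mono) auto
  finally show ?case by simp
qed

lemma finite_Delta_set: "finite {dist (xs ! i) (xs ! j) | i j. i < length xs \<and> j < length xs}"
proof -
  have "{dist (xs ! i) (xs ! j) | i j. i < length xs \<and> j < length xs}
        = (\<lambda>(i, j). dist (xs ! i) (xs ! j)) ` ({..<length xs} \<times> {..<length xs})"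
    by auto
  then show ?thesis by simp
qed

lemma dist_le_Delta: "i < length xs \<Longrightarrow> j < length xs \<Longrightarrow> dist (xs ! i) (xs ! j) \<le> Delta xs"
  unfolding Delta_def by (rule Max_ge[OF finite_Delta_set]) blast

lemma Delta_nonneg: "0 < length xs \<Longrightarrow> 0 \<le> Delta xs"
  using dist_le_Delta[of 0 xs 0] by simp

lemma Delta_le:
  assumes "0 < length xs" "\<And>i j. i < length xs \<Longrightarrow> j < length xs \<Longrightarrow> dist (xs ! i) (xs ! j) \<le> B"
  shows "Delta xs \<le> B"
  unfolding Delta_def using assms by (subst Max_le_iff[OF finite_Delta_set]) auto

lemma dist_le_adjacent_chain:
  fixes xs :: "'a::metric_space list"
  assumes gap: "\<And>i. Suc i < length xs \<Longrightarrow> dist (xs ! i) (xs ! Suc i) \<le> e"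
    and "i \<le> j" "j < length xs"
  shows "dist (xs ! i) (xs ! j) \<le> real (j - i) * e"
  using assms(2,3)
proof (induction j)
  case 0
  then show ?case by simp
next
  case (Suc j)
  show ?case
  proof (cases "i = Suc j")
    case True
    then show ?thesis by simp
  next
    case False
    then have "i \<le> j" using Suc by simp
    have "dist (xs ! i) (xs ! Suc j) \<le> dist (xs ! i) (xs ! j) + dist (xs ! j) (xs ! Suc j)"
      by (rule dist_triangle)
    also have "\<dots> \<le> real (j - i) * e + e"
      using Suc \<open>i \<le> j\<close> gap by (intro add_mono) auto
    also have "\<dots> = real (Suc j - i) * e"
      using \<open>i \<le> j\<close> by (simp add: Suc_diff_le algebra_simps)
    finally show ?thesis .
  qed
qed

lemma Delta_le_adjacent_chain:
  fixes xs :: "'a::metric_space list"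
  assumes len: "length xs = Suc k" and "0 \<le> e"
    and gap: "\<And>i. i < k \<Longrightarrow> dist (xs ! i) (xs ! Suc i) \<le> e"
  shows "Delta xs \<le> real k * e"
proof (rule Delta_le)
  show "0 < length xs" using len by simp
next
  have chain: "dist (xs ! i) (xs ! j) \<le> real k * e" if "i \<le> j" "j < length xs" for i j
  proof -
    have "dist (xs ! i) (xs ! j) \<le> real (j - i) * e"
      using dist_le_adjacent_chain[of xs e i j] gap len that by simp
    also have "\<dots> \<le> real k * e"
      using that len \<open>0 \<le> e\<close> by (intro mult_right_mono) auto
    finally show ?thesis .
  qed
  fix i j assume "i < length xs" "j < length xs"
  then show "dist (xs ! i) (xs ! j) \<le> real k * e"
  proof (cases "i \<le> j")
    case False
    then show ?thesis using chain[of j i] \<open>i < length xs\<close> by (simp add: dist_commute)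
  qed (use chain in simp)
qed

lemma Delta_funpow_barycentric_le:
  fixes \<mu> :: "'a::metric_space list \<Rightarrow> 'a"
  assumes contr: "coordwise_contractive k \<rho> \<mu>" and "0 \<le> \<rho>" and len: "length xs = Suc k"
  shows "Delta ((barycentric \<mu> ^^ n) xs) \<le> real k * (\<rho> ^ n * Delta xs)"
proof (rule Delta_le_adjacent_chain)
  show "0 \<le> \<rho> ^ n * Delta xs"
    using \<open>0 \<le> \<rho>\<close> Delta_nonneg[of xs] len by simp
  show "dist ((barycentric \<mu> ^^ n) xs ! i) ((barycentric \<mu> ^^ n) xs ! Suc i) \<le> \<rho> ^ n * Delta xs"
    if "i < k" for i
    by (rule dist_funpow_barycentric_adjacent[OF contr \<open>0 \<le> \<rho>\<close> len _ that])
      (simp add: dist_le_Delta len)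
qed (use len in simp)

theorem lemma3p8:
  fixes \<mu> :: "'a::metric_space list \<Rightarrow> 'a" and k :: nat and \<rho> :: real
  assumes "0 < \<rho>" and "\<rho> < 1"
    and "is_kmean k \<mu>"
    and "coordwise_contractive k \<rho> \<mu>"
  shows "weakly_beta_contractive k \<mu>"
  unfolding weakly_beta_contractive_def
proof (intro allI impI)
  fix xs :: "'a list" assume len: "length xs = Suc k"
  let ?bound = "\<lambda>n. real k * (\<rho> ^ n * Delta xs)"
  have "(\<lambda>n. \<rho> ^ n) \<longlonglongrightarrow> 0"
    using assms(1,2) by (intro LIMSEQ_power_zero) auto
  then have bound_lim: "?bound \<longlonglongrightarrow> 0"
    by (intro tendsto_mult_right_zero tendsto_mult_left_zero)
  have lower: "0 \<le> Delta ((barycentric \<mu> ^^ n) xs)" for n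
    using len by (simp add: Delta_nonneg)
  have upper: "Delta ((barycentric \<mu> ^^ n) xs) \<le> ?bound n" for n
    using Delta_funpow_barycentric_le[OF assms(4) _ len] assms(1) by simp
  show "(\<lambda>n. Delta ((barycentric \<mu> ^^ n) xs)) \<longlonglongrightarrow> 0"
    by (rule tendsto_sandwich[OF _ _ tendsto_const bound_lim]) (use lower upper in auto)
qed

end
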